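(* Consider the averaged buck converter $-L\dot I=V-uV_s$, $C\dot V=I-GV$ with scalar constants $L>0$, $C>0$, $G\ge0$, and a known constant $V_s\neq0$. Assume there exist constants $V^\star>0$, $\bar u\in(0,1)$, $\bar I$ with $0=V^\star-\bar uV_s$ and $0=\bar I-GV^\star$. Consider the dynamic controller $$\dot u=-\frac1{k_d}\big(k_i(u-\bar u)+V_s\dot I\big),$$ with $k_d>0$, $k_i>0$. Then the solution $(I,V,u)$ of the closed-loop system asymptotically converges to $(\bar I,V^\star,\bar u)$.
   Context: $I$ is the inductor current, $V$ the capacitor voltage, $u$ the duty cycle (treated as a state of the closed loop); $I,V,\dot I$ are assumed measured. *)

theory Defs
  imports Complex_Main
begin

end

theory Submission
  imports Defs "HOL-Analysis.Lipschitz"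
begin

(* In the error coordinates x = I - Ibar, y = V - V*, z = u - ubar the closed loop is linear, and
   W = ki L x^2/2 + ki C y^2/2 + (kd z + Vs x)^2/2 satisfies W' = - ki G y^2 - ki kd z^2 <= 0.
   So W converges, the states and their derivatives stay bounded, and a Barbalat-type argument
   gives z -> 0. Barbalat's lemma applied to z gives z' -> 0; since z' = Vs/(L kd) y + c z for a
   constant c and Vs /= 0, this forces y -> 0, and applied to y it gives y' = (x - G y)/C -> 0,
   hence x -> 0. *)

lemma lipschitz_on_Ici_if_deriv_bounded:
  fixes g g' :: "real \<Rightarrow> real"
  assumes deriv: "\<And>t. a \<le> t \<Longrightarrow> (g has_real_derivative g' t) (at t)"
    and bound: "\<And>t. a \<le> t \<Longrightarrow> \<bar>g' t\<bar> \<le> K"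
  shows "K-lipschitz_on {a..} g"
proof (rule bounded_derivative_imp_lipschitz[where f' = "\<lambda>t h. g' t * h"])
  fix t :: real assume "t \<in> {a..}"
  then show "(g has_derivative (\<lambda>h. g' t * h)) (at t within {a..})"
    using deriv[of t] by (auto simp: has_field_derivative_def intro: has_derivative_at_withinI)
  show "onorm (\<lambda>h. g' t * h) \<le> K"
    using bound \<open>t \<in> {a..}\<close> onorm_scaleR[OF bounded_linear_ident[where 'a=real], of "g' t"]
    by (simp add: onorm_id)
next
  show "0 \<le> K" using bound[of a] by simp
qed simp

lemma tendsto_diff_shift_0:
  fixes f :: "real \<Rightarrow> real"
  assumes "(f \<longlongrightarrow> l) at_top"
  shows "((\<lambda>t. f (t + h) - f t) \<longlongrightarrow> 0) at_top"
proof -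
  have "filterlim (\<lambda>t. t + h) at_top at_top"
    by (subst add.commute) (rule filterlim_tendsto_add_at_top[OF tendsto_const filterlim_ident])
  then have "((\<lambda>t. f (t + h)) \<longlongrightarrow> l) at_top"
    using assms by (rule filterlim_compose[rotated])
  from tendsto_diff[OF this assms] show ?thesis by simp
qed

lemma tendsto_Inf_if_nonincreasing:
  fixes W :: "real \<Rightarrow> real"
  assumes antimono: "\<And>s t. a \<le> s \<Longrightarrow> s \<le> t \<Longrightarrow> W t \<le> W s"
    and bdd: "bdd_below (W ` {a..})"
  shows "(W \<longlongrightarrow> Inf (W ` {a..})) at_top"
proof (rule order_tendstoI)
  fix l assume "l < Inf (W ` {a..})"
  moreover have "Inf (W ` {a..}) \<le> W t" if "a \<le> t" for t
    using bdd that by (intro cInf_lower) auto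
  ultimately have "l < W t" if "a \<le> t" for t
    using that by (meson less_le_trans)
  then show "\<forall>\<^sub>F t in at_top. l < W t"
    using eventually_ge_at_top[of a] by (rule eventually_mono[rotated])
next
  fix u assume "Inf (W ` {a..}) < u"
  then obtain T where "a \<le> T" "W T < u"
    using cInf_lessD[of "W ` {a..}"] by auto
  with antimono have "W t < u" if "T \<le> t" for t
    using that by (meson le_less_trans)
  then show "\<forall>\<^sub>F t in at_top. W t < u"
    using eventually_ge_at_top[of T] by (rule eventually_mono[rotated])
qed

lemma lipschitz_tendsto_0_if_small_nearby:
  fixes g :: "real \<Rightarrow> real"
  assumes lip: "K-lipschitz_on {a..} g"
    and small: "\<And>h r. 0 < h \<Longrightarrow> 0 < r \<Longrightarrow> \<forall>\<^sub>F t in at_top. \<exists>\<xi>\<in>{t..t + h}. \<bar>g \<xi>\<bar> < r"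
  shows "(g \<longlongrightarrow> 0) at_top"
proof (rule tendstoI)
  fix \<epsilon> :: real assume "0 < \<epsilon>"
  define h where "h = \<epsilon> / (2 * (K + 1))"
  have "0 \<le> K" using lipschitz_on_nonneg[OF lip] .
  then have h: "0 < h" "K * h < \<epsilon> / 2"
    using \<open>0 < \<epsilon>\<close> by (auto simp: h_def field_simps)
  from small[OF h(1), of "\<epsilon> / 2"] \<open>0 < \<epsilon>\<close>
  have "\<forall>\<^sub>F t in at_top. \<exists>\<xi>\<in>{t..t + h}. \<bar>g \<xi>\<bar> < \<epsilon> / 2" by simp
  with eventually_ge_at_top[of a]
  show "\<forall>\<^sub>F t in at_top. dist (g t) 0 < \<epsilon>"
  proof eventually_elim
    case (elim t)
    then obtain \<xi> where \<xi>: "t \<le> \<xi>" "\<xi> \<le> t + h" "\<bar>g \<xi>\<bar> < \<epsilon> / 2" by auto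
    have "\<bar>g t - g \<xi>\<bar> \<le> K * \<bar>t - \<xi>\<bar>"
      using lipschitz_onD[OF lip, of t \<xi>] elim \<xi> by (simp add: dist_real_def)
    also have "\<dots> \<le> K * h" using \<xi> \<open>0 \<le> K\<close> by (intro mult_left_mono) auto
    finally show ?case using h \<xi> by simp
  qed
qed

lemma lipschitz_deriv_tendsto_0:
  fixes f f' :: "real \<Rightarrow> real"
  assumes lim: "(f \<longlongrightarrow> l) at_top"
    and deriv: "\<And>t. a \<le> t \<Longrightarrow> (f has_real_derivative f' t) (at t)"
    and lip: "K-lipschitz_on {a..} f'"
  shows "(f' \<longlongrightarrow> 0) at_top"
proof (rule lipschitz_tendsto_0_if_small_nearby[OF lip])
  fix h r :: real assume "0 < h" "0 < r"
  then have "\<forall>\<^sub>F t in at_top. \<bar>f (t + h) - f t\<bar> < h * r"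
    using tendstoD[OF tendsto_diff_shift_0[OF lim], of "h * r"] by simp
  with eventually_ge_at_top[of a] show "\<forall>\<^sub>F t in at_top. \<exists>\<xi>\<in>{t..t + h}. \<bar>f' \<xi>\<bar> < r"
  proof eventually_elim
    case (elim t)
    obtain \<xi> where \<xi>: "t < \<xi>" "\<xi> < t + h" "f (t + h) - f t = h * f' \<xi>"
      using MVT2[of t "t + h" f f'] deriv elim \<open>0 < h\<close> by force
    then have "h * \<bar>f' \<xi>\<bar> < h * r"
      using elim \<open>0 < h\<close> by (simp add: abs_mult)
    with \<xi> \<open>0 < h\<close> show ?case by auto
  qed
qed

lemma lipschitz_tendsto_0_if_dissipation:
  fixes W W' g :: "real \<Rightarrow> real"
  assumes lim: "(W \<longlongrightarrow> l) at_top"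
    and deriv: "\<And>t. a \<le> t \<Longrightarrow> (W has_real_derivative W' t) (at t)"
    and dissipation: "\<And>t. a \<le> t \<Longrightarrow> W' t \<le> - c * (g t)\<^sup>2" and "0 < c"
    and lip: "K-lipschitz_on {a..} g"
  shows "(g \<longlongrightarrow> 0) at_top"
proof (rule lipschitz_tendsto_0_if_small_nearby[OF lip])
  fix h r :: real assume "0 < h" "0 < r"
  then have "\<forall>\<^sub>F t in at_top. \<bar>W (t + h) - W t\<bar> < c * h * r\<^sup>2"
    using tendstoD[OF tendsto_diff_shift_0[OF lim], of "c * h * r\<^sup>2"] \<open>0 < c\<close> by simp
  with eventually_ge_at_top[of a] show "\<forall>\<^sub>F t in at_top. \<exists>\<xi>\<in>{t..t + h}. \<bar>g \<xi>\<bar> < r"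
  proof eventually_elim
    case (elim t)
    obtain \<xi> where \<xi>: "t < \<xi>" "\<xi> < t + h" "W (t + h) - W t = h * W' \<xi>"
      using MVT2[of t "t + h" W W'] deriv elim \<open>0 < h\<close> by force
    have "h * W' \<xi> \<le> h * (- c * (g \<xi>)\<^sup>2)"
      using dissipation[of \<xi>] \<xi> elim \<open>0 < h\<close> by (intro mult_left_mono) auto
    then have "c * h * (g \<xi>)\<^sup>2 \<le> - (W (t + h) - W t)"
      using \<xi> by (simp add: algebra_simps)
    with elim have "(c * h) * \<bar>g \<xi>\<bar>\<^sup>2 < (c * h) * r\<^sup>2" by simp
    then have "\<bar>g \<xi>\<bar>\<^sup>2 < r\<^sup>2" using \<open>0 < c\<close> \<open>0 < h\<close> by simp
    then have "\<bar>g \<xi>\<bar> < r" using \<open>0 < r\<close> by (auto intro: power2_less_imp_less)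
    with \<xi> show ?case by auto
  qed
qed

lemma abs_lincomb_le:
  fixes p q \<alpha> \<beta> :: real
  assumes "\<bar>p\<bar> \<le> M" and "\<bar>q\<bar> \<le> N"
  shows "\<bar>\<alpha> * p + \<beta> * q\<bar> \<le> \<bar>\<alpha>\<bar> * M + \<bar>\<beta>\<bar> * N"
proof -
  have "\<bar>\<alpha> * p + \<beta> * q\<bar> \<le> \<bar>\<alpha>\<bar> * \<bar>p\<bar> + \<bar>\<beta>\<bar> * \<bar>q\<bar>"
    using abs_triangle_ineq[of "\<alpha> * p" "\<beta> * q"] by (simp add: abs_mult)
  also have "\<dots> \<le> \<bar>\<alpha>\<bar> * M + \<bar>\<beta>\<bar> * N"
    using assms by (intro add_mono mult_left_mono) auto
  finally show ?thesis .
qed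

locale buck_error_dynamics =
  fixes L C G Vs kd ki a :: real
    and x y z dx dy dz :: "real \<Rightarrow> real"
  assumes L_pos: "0 < L" and C_pos: "0 < C" and G_nonneg: "0 \<le> G" and Vs_nonzero: "Vs \<noteq> 0"
    and kd_pos: "0 < kd" and ki_pos: "0 < ki"
    and deriv_x: "\<And>t. a \<le> t \<Longrightarrow> (x has_real_derivative dx t) (at t)"
    and deriv_y: "\<And>t. a \<le> t \<Longrightarrow> (y has_real_derivative dy t) (at t)"
    and deriv_z: "\<And>t. a \<le> t \<Longrightarrow> (z has_real_derivative dz t) (at t)"
    and inductor: "\<And>t. a \<le> t \<Longrightarrow> L * dx t = Vs * z t - y t"
    and capacitor: "\<And>t. a \<le> t \<Longrightarrow> C * dy t = x t - G * y t"
    and controller: "\<And>t. a \<le> t \<Longrightarrow> kd * dz t + Vs * dx t = - ki * z t"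
begin

definition lyapunov :: "real \<Rightarrow> real" where
  "lyapunov t = ki * L * (x t)\<^sup>2 / 2 + ki * C * (y t)\<^sup>2 / 2 + (kd * z t + Vs * x t)\<^sup>2 / 2"

lemma lyapunov_has_derivative:
  assumes "a \<le> t"
  shows "(lyapunov has_real_derivative - ki * G * (y t)\<^sup>2 - ki * kd * (z t)\<^sup>2) (at t)"
proof -
  have "(lyapunov has_real_derivative ki * x t * (L * dx t) + ki * y t * (C * dy t)
      + (kd * z t + Vs * x t) * (kd * dz t + Vs * dx t)) (at t)"
    unfolding lyapunov_def[abs_def] using deriv_x[OF assms] deriv_y[OF assms] deriv_z[OF assms]
    by (auto intro!: derivative_eq_intros simp: algebra_simps power2_eq_square)
  then show ?thesis
    by (simp only: inductor[OF assms] capacitor[OF assms] controller[OF assms])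
      (simp add: algebra_simps power2_eq_square)
qed

lemma lyapunov_nonneg: "0 \<le> lyapunov t"
  unfolding lyapunov_def using ki_pos L_pos C_pos by simp

lemma lyapunov_nonincreasing:
  assumes "a \<le> s" and "s \<le> t"
  shows "lyapunov t \<le> lyapunov s"
proof (rule DERIV_nonpos_imp_nonincreasing[OF \<open>s \<le> t\<close>])
  fix r assume "s \<le> r"
  have "0 \<le> ki * G * (y r)\<^sup>2 + ki * kd * (z r)\<^sup>2"
    using ki_pos G_nonneg kd_pos by simp
  then show "\<exists>D. (lyapunov has_real_derivative D) (at r) \<and> D \<le> 0"
    using lyapunov_has_derivative[of r] \<open>a \<le> s\<close> \<open>s \<le> r\<close> by auto
qed

lemma lyapunov_converges: "(lyapunov \<longlongrightarrow> Inf (lyapunov ` {a..})) at_top"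
  using lyapunov_nonincreasing lyapunov_nonneg
  by (intro tendsto_Inf_if_nonincreasing bdd_belowI2[where m = 0]) auto

lemma states_bounded:
  obtains Mx My Mz where "\<And>t. a \<le> t \<Longrightarrow> \<bar>x t\<bar> \<le> Mx" and "\<And>t. a \<le> t \<Longrightarrow> \<bar>y t\<bar> \<le> My"
    and "\<And>t. a \<le> t \<Longrightarrow> \<bar>z t\<bar> \<le> Mz"
proof
  define B where "B = lyapunov a"
  fix t assume "a \<le> t"
  have "0 \<le> ki * L * (x t)\<^sup>2 / 2" "0 \<le> ki * C * (y t)\<^sup>2 / 2" "0 \<le> (kd * z t + Vs * x t)\<^sup>2 / 2"
    using ki_pos L_pos C_pos by simp_all
  with lyapunov_nonincreasing[OF order_refl \<open>a \<le> t\<close>]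
  have "ki * L * (x t)\<^sup>2 / 2 \<le> B" "ki * C * (y t)\<^sup>2 / 2 \<le> B" "(kd * z t + Vs * x t)\<^sup>2 / 2 \<le> B"
    unfolding B_def lyapunov_def by linarith+
  then have "\<bar>x t\<bar>\<^sup>2 \<le> 2 * B / (ki * L)" "\<bar>y t\<bar>\<^sup>2 \<le> 2 * B / (ki * C)"
    "\<bar>kd * z t + Vs * x t\<bar>\<^sup>2 \<le> 2 * B"
    using ki_pos L_pos C_pos by (simp_all add: field_simps)
  then have x: "\<bar>x t\<bar> \<le> sqrt (2 * B / (ki * L))" and y: "\<bar>y t\<bar> \<le> sqrt (2 * B / (ki * C))"
    and xz: "\<bar>kd * z t + Vs * x t\<bar> \<le> sqrt (2 * B)"
    by (simp_all add: real_le_rsqrt)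
  show "\<bar>x t\<bar> \<le> sqrt (2 * B / (ki * L))" by (fact x)
  show "\<bar>y t\<bar> \<le> sqrt (2 * B / (ki * C))" by (fact y)
  have "kd * \<bar>z t\<bar> \<le> \<bar>kd * z t + Vs * x t\<bar> + \<bar>Vs\<bar> * \<bar>x t\<bar>"
    using kd_pos abs_triangle_ineq4[of "kd * z t + Vs * x t" "Vs * x t"] by (simp add: abs_mult)
  also have "\<dots> \<le> sqrt (2 * B) + \<bar>Vs\<bar> * sqrt (2 * B / (ki * L))"
    using xz x by (intro add_mono mult_left_mono) auto
  finally show "\<bar>z t\<bar> \<le> (sqrt (2 * B) + \<bar>Vs\<bar> * sqrt (2 * B / (ki * L))) / kd"
    using kd_pos by (simp add: field_simps)
qed

lemma dx_eq: "a \<le> t \<Longrightarrow> dx t = Vs / L * z t + (- 1 / L) * y t"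
  using inductor[of t] L_pos by (simp add: field_simps)

lemma dy_eq: "a \<le> t \<Longrightarrow> dy t = 1 / C * x t + (- G / C) * y t"
  using capacitor[of t] C_pos by (simp add: field_simps)

lemma dz_eq: "a \<le> t \<Longrightarrow> dz t = Vs / (L * kd) * y t + (- (ki + Vs\<^sup>2 / L) / kd) * z t"
  using controller[of t] dx_eq[of t] L_pos kd_pos by (simp add: field_simps power2_eq_square)

lemma states_lipschitz:
  obtains Kx Ky Kz where "Kx-lipschitz_on {a..} x" and "Ky-lipschitz_on {a..} y"
    and "Kz-lipschitz_on {a..} z"
proof -
  obtain Mx My Mz where x: "\<And>t. a \<le> t \<Longrightarrow> \<bar>x t\<bar> \<le> Mx" and y: "\<And>t. a \<le> t \<Longrightarrow> \<bar>y t\<bar> \<le> My"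
    and z: "\<And>t. a \<le> t \<Longrightarrow> \<bar>z t\<bar> \<le> Mz"
    using states_bounded by blast
  have dx: "\<bar>dx t\<bar> \<le> \<bar>Vs / L\<bar> * Mz + \<bar>- 1 / L\<bar> * My" if "a \<le> t" for t
    unfolding dx_eq[OF that] using x y z that by (intro abs_lincomb_le)
  have dy: "\<bar>dy t\<bar> \<le> \<bar>1 / C\<bar> * Mx + \<bar>- G / C\<bar> * My" if "a \<le> t" for t
    unfolding dy_eq[OF that] using x y z that by (intro abs_lincomb_le)
  have dz: "\<bar>dz t\<bar> \<le> \<bar>Vs / (L * kd)\<bar> * My + \<bar>- (ki + Vs\<^sup>2 / L) / kd\<bar> * Mz" if "a \<le> t" for t
    unfolding dz_eq[OF that] using x y z that by (intro abs_lincomb_le)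
  show thesis
    using lipschitz_on_Ici_if_deriv_bounded[OF deriv_x dx]
      lipschitz_on_Ici_if_deriv_bounded[OF deriv_y dy]
      lipschitz_on_Ici_if_deriv_bounded[OF deriv_z dz]
    by (rule that)
qed

lemma z_tendsto_0: "(z \<longlongrightarrow> 0) at_top"
proof -
  obtain K where "K-lipschitz_on {a..} z" using states_lipschitz by metis
  moreover have "- ki * G * (y t)\<^sup>2 - ki * kd * (z t)\<^sup>2 \<le> - (ki * kd) * (z t)\<^sup>2" for t
    using ki_pos G_nonneg by simp
  ultimately show ?thesis
    using ki_pos kd_pos
    by (intro lipschitz_tendsto_0_if_dissipation[OF lyapunov_converges lyapunov_has_derivative,
          where c = "ki * kd"]) auto
qed

lemma y_tendsto_0: "(y \<longlongrightarrow> 0) at_top"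
proof -
  obtain Ky Kz where "Ky-lipschitz_on {a..} y" "Kz-lipschitz_on {a..} z" using states_lipschitz by metis
  then have "(\<bar>Vs / (L * kd)\<bar> * Ky + \<bar>- (ki + Vs\<^sup>2 / L) / kd\<bar> * Kz)-lipschitz_on {a..} dz"
    by (intro lipschitz_on_transform[OF lipschitz_on_add[OF lipschitz_on_cmult_real lipschitz_on_cmult_real]])
      (auto simp: dz_eq)
  with z_tendsto_0 deriv_z have "(dz \<longlongrightarrow> 0) at_top"
    by (rule lipschitz_deriv_tendsto_0)
  then have "((\<lambda>t. (dz t + (ki + Vs\<^sup>2 / L) / kd * z t) / (Vs / (L * kd))) \<longlongrightarrow> 0) at_top"
    using z_tendsto_0 Vs_nonzero kd_pos by (auto intro!: tendsto_eq_intros)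
  moreover have "\<forall>\<^sub>F t in at_top. (dz t + (ki + Vs\<^sup>2 / L) / kd * z t) / (Vs / (L * kd)) = y t"
    using eventually_ge_at_top[of a]
    by eventually_elim (use Vs_nonzero L_pos kd_pos in \<open>simp add: dz_eq field_simps\<close>)
  ultimately show ?thesis by (rule Lim_transform_eventually)
qed

lemma x_tendsto_0: "(x \<longlongrightarrow> 0) at_top"
proof -
  obtain Kx Ky where "Kx-lipschitz_on {a..} x" "Ky-lipschitz_on {a..} y" using states_lipschitz by metis
  then have "(\<bar>1 / C\<bar> * Kx + \<bar>- G / C\<bar> * Ky)-lipschitz_on {a..} dy"
    by (intro lipschitz_on_transform[OF lipschitz_on_add[OF lipschitz_on_cmult_real
          lipschitz_on_cmult_real]]) (auto simp: dy_eq)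
  with y_tendsto_0 deriv_y have "(dy \<longlongrightarrow> 0) at_top"
    by (rule lipschitz_deriv_tendsto_0)
  then have "((\<lambda>t. C * dy t + G * y t) \<longlongrightarrow> 0) at_top"
    using y_tendsto_0 by (auto intro!: tendsto_eq_intros)
  moreover have "\<forall>\<^sub>F t in at_top. C * dy t + G * y t = x t"
    using eventually_ge_at_top[of a] by eventually_elim (simp add: capacitor)
  ultimately show ?thesis by (rule Lim_transform_eventually)
qed

end

theorem corollary2:
  fixes L C G Vs Vstar ubar Ibar kd ki :: real
    and I V u dI dV du :: "real \<Rightarrow> real"
  assumes "L > 0" and "C > 0" and "G \<ge> 0" and "Vs \<noteq> 0"
    and "Vstar > 0" and "0 < ubar" and "ubar < 1"
    and "0 = Vstar - ubar * Vs" and "0 = Ibar - G * Vstar"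
    and "kd > 0" and "ki > 0"
    and dI: "\<And>t. t \<ge> 0 \<Longrightarrow> (I has_real_derivative dI t) (at t within {0..})"
    and dV: "\<And>t. t \<ge> 0 \<Longrightarrow> (V has_real_derivative dV t) (at t within {0..})"
    and du: "\<And>t. t \<ge> 0 \<Longrightarrow> (u has_real_derivative du t) (at t within {0..})"
    and eqI: "\<And>t. t \<ge> 0 \<Longrightarrow> - L * dI t = V t - u t * Vs"
    and eqV: "\<And>t. t \<ge> 0 \<Longrightarrow> C * dV t = I t - G * V t"
    and eqU: "\<And>t. t \<ge> 0 \<Longrightarrow> du t = - (1 / kd) * (ki * (u t - ubar) + Vs * dI t)"
  shows "(I \<longlongrightarrow> Ibar) at_top \<and> (V \<longlongrightarrow> Vstar) at_top \<and> (u \<longlongrightarrow> ubar) at_top"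
proof -
  \<comment> \<open>The derivatives are one-sided at time 0, so the error system is started at time 1.\<close>
  have at_within_Ici: "at t within {0..} = at t" if "1 \<le> t" for t :: real
    using that by (subst at_within_interior) (auto simp: interior_Ici[of "-1"])
  have Vstar: "Vstar = ubar * Vs" and Ibar: "Ibar = G * Vstar"
    using \<open>0 = Vstar - ubar * Vs\<close> \<open>0 = Ibar - G * Vstar\<close> by linarith+
  interpret buck_error_dynamics L C G Vs kd ki 1
    "\<lambda>t. I t - Ibar" "\<lambda>t. V t - Vstar" "\<lambda>t. u t - ubar" dI dV du
  proof unfold_locales
    fix t :: real assume "1 \<le> t"
    then have "0 \<le> t" by simp
    show "((\<lambda>t. I t - Ibar) has_real_derivative dI t) (at t)"
      using dI[OF \<open>0 \<le> t\<close>] at_within_Ici[OF \<open>1 \<le> t\<close>] by (auto intro!: derivative_eq_intros)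
    show "((\<lambda>t. V t - Vstar) has_real_derivative dV t) (at t)"
      using dV[OF \<open>0 \<le> t\<close>] at_within_Ici[OF \<open>1 \<le> t\<close>] by (auto intro!: derivative_eq_intros)
    show "((\<lambda>t. u t - ubar) has_real_derivative du t) (at t)"
      using du[OF \<open>0 \<le> t\<close>] at_within_Ici[OF \<open>1 \<le> t\<close>] by (auto intro!: derivative_eq_intros)
    show "L * dI t = Vs * (u t - ubar) - (V t - Vstar)"
      using eqI[OF \<open>0 \<le> t\<close>] Vstar by (simp add: algebra_simps)
    show "C * dV t = I t - Ibar - G * (V t - Vstar)"
      using eqV[OF \<open>0 \<le> t\<close>] Ibar by (simp add: algebra_simps)
    show "kd * du t + Vs * dI t = - ki * (u t - ubar)"
      using eqU[OF \<open>0 \<le> t\<close>] \<open>kd > 0\<close> by (simp add: field_simps)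
  qed (use assms(1-4,10,11) in auto)
  show ?thesis
    using x_tendsto_0 y_tendsto_0 z_tendsto_0 by (simp add: LIM_zero_iff)
qed

end
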